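(* Let $\Phi=\{\phi_i\}_{i=1}^l$ be an IFS on $\mathbb R^d$ with attractor $X$, let $z\in X$, and let $\Psi:\mathcal D^*\to[0,\infty)$ be weakly decaying with $\max_{\mathbf a\in\mathcal D^n}\Psi(\mathbf a)\to0$. 1. If each $\phi_i$ is a similarity and $W_\Phi(z,\Psi)$ has positive Lebesgue measure, then Lebesgue-a.e. $x\in X$ lies in $W_\Phi(z,\Psi)$. 2. If $\Phi$ is arbitrary and there is a $\sigma$-invariant ergodic probability measure $\mathfrak m$ on $\mathcal D^{\mathbb N}$ whose pushforward $\mu=\mathfrak m\circ\pi^{-1}$ is equivalent to $\mathcal L|_X$ (Lebesgue measure restricted to $X$), and $W_\Phi(z,\Psi)$ has positive Lebesgue measure, then Lebesgue-a.e. $x\in X$ lies in $W_\Phi(z,\Psi)$.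
   Context: $\phi_{\mathbf a}=\phi_{a_1}\circ\cdots\circ\phi_{a_n}$, $\pi((a_j))=\lim_n\phi_{a_1\cdots a_n}(0)$. $W_\Phi(z,\Psi)=\{x:|x-\phi_{\mathbf a}(z)|\le\Psi(\mathbf a)$ for infinitely many $\mathbf a\in\mathcal D^*\}$. $\Psi$ is weakly decaying if $\inf_{\mathbf a\in\mathcal D^*}\min_{i\in\mathcal D}\Psi(i\mathbf a)/\Psi(\mathbf a)>0$. A similarity is a map with $|\phi(x)-\phi(y)|=r|x-y|$ for some $r\in(0,1)$. *)

theory Defs
  imports "HOL-Analysis.Analysis" "HOL-Probability.Probability"
begin

definition words :: "nat \<Rightarrow> nat list set" where
  "words l = {a. set a \<subseteq> {1..l}}"

definition words_n :: "nat \<Rightarrow> nat \<Rightarrow> nat list set" where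
  "words_n l n = {a. set a \<subseteq> {1..l} \<and> length a = n}"

definition phi_word :: "(nat \<Rightarrow> 'a \<Rightarrow> 'a) \<Rightarrow> nat list \<Rightarrow> 'a \<Rightarrow> 'a" where
  "phi_word \<phi> a = foldr (\<lambda>i f. \<phi> i \<circ> f) a id"

definition is_contraction :: "('a::metric_space \<Rightarrow> 'a) \<Rightarrow> bool" where
  "is_contraction f \<longleftrightarrow> (\<exists>r. 0 \<le> r \<and> r < 1 \<and> (\<forall>x y. dist (f x) (f y) \<le> r * dist x y))"

definition is_similarity :: "('a::metric_space \<Rightarrow> 'a) \<Rightarrow> bool" where
  "is_similarity f \<longleftrightarrow> (\<exists>r. 0 < r \<and> r < 1 \<and> (\<forall>x y. dist (f x) (f y) = r * dist x y))"

definition IFS :: "nat \<Rightarrow> (nat \<Rightarrow> 'a::euclidean_space \<Rightarrow> 'a) \<Rightarrow> bool" where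
  "IFS l \<phi> \<longleftrightarrow> l \<ge> 1 \<and> (\<forall>i\<in>{1..l}. is_contraction (\<phi> i))"

definition is_attractor :: "nat \<Rightarrow> (nat \<Rightarrow> 'a::euclidean_space \<Rightarrow> 'a) \<Rightarrow> 'a set \<Rightarrow> bool" where
  "is_attractor l \<phi> X \<longleftrightarrow> X \<noteq> {} \<and> compact X \<and> X = (\<Union>i\<in>{1..l}. \<phi> i ` X)"

text \<open>Coding map; a sequence (a_1,a_2,...) is represented by omega with a_(j+1) = omega j.\<close>
definition coding :: "(nat \<Rightarrow> 'a::euclidean_space \<Rightarrow> 'a) \<Rightarrow> (nat \<Rightarrow> nat) \<Rightarrow> 'a" where
  "coding \<phi> \<omega> = lim (\<lambda>n. phi_word \<phi> (map \<omega> [0..<n]) 0)"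

definition W_set :: "nat \<Rightarrow> (nat \<Rightarrow> 'a::euclidean_space \<Rightarrow> 'a) \<Rightarrow> 'a \<Rightarrow> (nat list \<Rightarrow> real) \<Rightarrow> 'a set" where
  "W_set l \<phi> z \<Psi> = {x. infinite {a \<in> words l. dist x (phi_word \<phi> a z) \<le> \<Psi> a}}"

text \<open>Weakly decaying: inf_a min_i Psi(i a)/Psi(a) > 0, written multiplicatively.\<close>
definition weakly_decaying :: "nat \<Rightarrow> (nat list \<Rightarrow> real) \<Rightarrow> bool" where
  "weakly_decaying l \<Psi> \<longleftrightarrow> (\<exists>c>0. \<forall>a\<in>words l. \<forall>i\<in>{1..l}. \<Psi> (i # a) \<ge> c * \<Psi> a)"

definition seq_space :: "nat \<Rightarrow> (nat \<Rightarrow> nat) measure" where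
  "seq_space l = (\<Pi>\<^sub>M j\<in>UNIV. count_space {1..l})"

definition shift :: "(nat \<Rightarrow> nat) \<Rightarrow> (nat \<Rightarrow> nat)" where
  "shift \<omega> = (\<lambda>n. \<omega> (Suc n))"

definition shift_invariant_ergodic :: "nat \<Rightarrow> (nat \<Rightarrow> nat) measure \<Rightarrow> bool" where
  "shift_invariant_ergodic l m \<longleftrightarrow>
     prob_space m \<and> sets m = sets (seq_space l) \<and>
     shift \<in> measurable m m \<and>
     (\<forall>A\<in>sets m. emeasure m (shift -` A \<inter> space m) = emeasure m A) \<and>
     (\<forall>A\<in>sets m. shift -` A \<inter> space m = A \<longrightarrow> emeasure m A = 0 \<or> emeasure m A = 1)"

end

theory Submission
  imports Defs
begin

text \<open>Pass from \<open>W_set\<close> to the set \<open>V\<close> of points that are \<open>\<Psi>\<close>-approximable up to some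
  constant factor. A Cassels-type argument shows that enlarging \<open>\<Psi>\<close> by a constant factor changes
  the limsup set only by a null set: at each point of the difference, arbitrarily small balls
  contain a ball of comparable size missing the difference, and Vitali's covering theorem turns
  such a uniform density gap into measure zero. Hence \<open>V\<close> and \<open>W_set\<close> agree up to a null set,
  while weak decay makes \<open>V\<close> invariant under every map of the IFS. It remains to show that this
  invariant set, which meets \<open>X\<close> in positive measure, has full measure in \<open>X\<close>.
  For similarities, every point of \<open>X\<close> lies in arbitrarily small similar copies of \<open>X\<close>, each
  containing a scaled copy of \<open>V \<inter> X\<close> inside \<open>V\<close>; so \<open>V\<close> has density bounded below at
  every point of \<open>X\<close>, and \<open>X - V\<close> is null by the same density-gap argument.
  In the ergodic case the coding preimage \<open>E\<close> of \<open>V\<close> satisfies \<open>shift -` E \<subseteq> E\<close>, so it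
  has measure 0 or 1, and the equivalence of the pushforward measure with Lebesgue measure on
  \<open>X\<close> carries full measure back to \<open>X\<close>.\<close>

lemma measure_le_if_le_open_supersets:
  fixes S :: "'a::euclidean_space set"
  assumes S: "S \<in> lmeasurable" and c: "0 \<le> c"
    and le: "\<And>Q. open Q \<Longrightarrow> S \<subseteq> Q \<Longrightarrow> Q \<in> lmeasurable \<Longrightarrow> a \<le> c * measure lebesgue Q"
  shows "a \<le> c * measure lebesgue S"
proof (rule field_le_epsilon)
  fix e :: real assume e: "e > 0"
  then obtain Q where Q: "open Q" "S \<subseteq> Q" "Q - S \<in> lmeasurable"
    "emeasure lebesgue (Q - S) < ennreal (e / (c + 1))"
    using sets_lebesgue_outer_open[of S "e / (c + 1)"] S c by auto
  have QS: "Q = S \<union> (Q - S)" using Q(2) by blast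
  have Q_meas: "Q \<in> lmeasurable"
    using S Q(3) by (subst QS) (rule fmeasurable.Un)
  have "measure lebesgue Q \<le> measure lebesgue S + measure lebesgue (Q - S)"
    using S Q(3) by (subst QS, intro measure_Un_le) auto
  also have "measure lebesgue (Q - S) < e / (c + 1)"
    using Q(3,4) e c by (simp add: emeasure_eq_measure2 ennreal_less_iff)
  finally have "c * measure lebesgue Q \<le> c * (measure lebesgue S + e / (c + 1))"
    using c by (intro mult_left_mono) auto
  also have "\<dots> \<le> c * measure lebesgue S + e"
    using e c by (simp add: field_simps)
  finally show "a \<le> c * measure lebesgue S + e"
    using le[OF Q(1,2) Q_meas] by linarith
qed

lemma Vitali_fine_cover_in_open:
  fixes S Q :: "'a::euclidean_space set"
  assumes Q: "open Q" "S \<subseteq> Q"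
    and fine: "\<And>x r. x \<in> S \<Longrightarrow> 0 < r \<Longrightarrow> \<exists>d. 0 < d \<and> d \<le> r \<and> P x d"
  obtains C where "countable C"
    and "\<forall>(x, d)\<in>C. x \<in> S \<and> 0 < d \<and> ball x d \<subseteq> Q \<and> P x d"
    and "pairwise (\<lambda>i j. disjnt (ball (fst i) (snd i)) (ball (fst j) (snd j))) C"
    and "negligible (S - (\<Union>(x, d)\<in>C. ball x d))"
proof -
  let ?K = "{(x, d). x \<in> S \<and> 0 < d \<and> ball x d \<subseteq> Q \<and> P x d}"
  have "\<exists>i. i \<in> ?K \<and> x \<in> ball (fst i) (snd i) \<and> snd i < r" if x: "x \<in> S" and r: "0 < r" for x r
  proof -
    obtain k where k: "0 < k" "ball x k \<subseteq> Q"
      using Q x openE by blast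
    obtain d where d: "0 < d" "d \<le> min (r/2) k" "P x d"
      using fine[OF x, of "min (r/2) k"] r k by auto
    have "ball x d \<subseteq> Q" using d k by (meson min.boundedE order.trans subset_ball)
    with d x r show ?thesis by (intro exI[of _ "(x, d)"]) auto
  qed
  then obtain C where C: "countable C" "C \<subseteq> ?K"
    "pairwise (\<lambda>i j. disjnt (ball (fst i) (snd i)) (ball (fst j) (snd j))) C"
    "negligible (S - (\<Union>i\<in>C. ball (fst i) (snd i)))"
    by (rule Vitali_covering_theorem_balls[of S ?K fst snd]) blast
  show ?thesis
  proof (rule that[OF C(1) _ C(3)])
    show "\<forall>(x, d)\<in>C. x \<in> S \<and> 0 < d \<and> ball x d \<subseteq> Q \<and> P x d"
      using C(2) by blast
    show "negligible (S - (\<Union>(x, d)\<in>C. ball x d))"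
      using C(4) by (simp add: case_prod_unfold)
  qed
qed

lemma measure_UN_disjoint_balls_le:
  fixes E :: "'a::euclidean_space \<Rightarrow> real \<Rightarrow> 'a set"
  assumes C: "countable C"
    and disj: "pairwise (\<lambda>i j. disjnt (ball (fst i) (snd i)) (ball (fst j) (snd j))) C"
    and Q: "Q \<in> lmeasurable" "\<And>x d. (x, d) \<in> C \<Longrightarrow> ball x d \<subseteq> Q"
    and E: "\<And>x d. (x, d) \<in> C \<Longrightarrow> E x d \<in> lmeasurable"
      "\<And>x d. (x, d) \<in> C \<Longrightarrow> measure lebesgue (E x d) \<le> c * measure lebesgue (ball x d)"
    and c: "c \<ge> 0"
  shows "(\<Union>(x, d)\<in>C. E x d) \<in> lmeasurable"
    and "measure lebesgue (\<Union>(x, d)\<in>C. E x d) \<le> c * measure lebesgue Q"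
proof -
  have finite_bound: "measure lebesgue (\<Union>(x, d)\<in>I. E x d) \<le> c * measure lebesgue Q"
    if I: "I \<subseteq> C" "finite I" for I
  proof -
    have "measure lebesgue (\<Union>(x, d)\<in>I. E x d) \<le> (\<Sum>(x, d)\<in>I. measure lebesgue (E x d))"
      unfolding case_prod_unfold using I E(1) by (intro measure_UNION_le) auto
    also have "\<dots> \<le> (\<Sum>(x, d)\<in>I. c * measure lebesgue (ball x d))"
      using I E(2) by (intro sum_mono) auto
    also have "\<dots> = c * measure lebesgue (\<Union>(x, d)\<in>I. ball x d)"
      using I disj
      by (subst measure_UNION') (auto simp: sum_distrib_left case_prod_unfold elim: pairwise_mono)
    also have "\<dots> \<le> c * measure lebesgue Q"
      using I Q c
      by (intro mult_left_mono measure_mono_fmeasurable) (auto simp: sets.finite_UN)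
    finally show ?thesis .
  qed
  show "(\<Union>(x, d)\<in>C. E x d) \<in> lmeasurable"
    using fmeasurable_UN_bound[OF C _ finite_bound] E(1) by auto
  show "measure lebesgue (\<Union>(x, d)\<in>C. E x d) \<le> c * measure lebesgue Q"
    using measure_UN_bound[OF C _ finite_bound] E(1) by auto
qed

lemma measure_cball_scaled:
  fixes c x :: "'a::euclidean_space"
  assumes "k \<ge> 0" "r \<ge> 0"
  shows "measure lebesgue (cball c (k * r)) = k ^ DIM('a) * measure lebesgue (ball x r)"
  using assms content_ball_conv_unit_ball[of "k * r" c] content_ball_conv_unit_ball[of r x]
  by (simp add: content_cball_conv_ball power_mult_distrib)

lemma measure_Diff_Int_ball_le:
  assumes T: "T \<in> sets lebesgue" and V: "V \<in> sets lebesgue"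
    and dense: "\<kappa> * measure lebesgue (ball x d) \<le> measure lebesgue (V \<inter> ball x d)"
  shows "measure lebesgue ((T - V) \<inter> ball x d) \<le> (1 - \<kappa>) * measure lebesgue (ball x d)"
proof -
  have Vb: "V \<inter> ball x d \<in> lmeasurable"
    using fmeasurable_Int_fmeasurable[OF lmeasurable_ball V] by (metis Int_commute)
  have "measure lebesgue ((T - V) \<inter> ball x d) \<le> measure lebesgue (ball x d - V \<inter> ball x d)"
    using T V Vb by (intro measure_mono_fmeasurable fmeasurable_Diff) (auto intro: fmeasurableD)
  also have "\<dots> = measure lebesgue (ball x d) - measure lebesgue (V \<inter> ball x d)"
    using Vb by (intro measurable_measure_Diff) auto
  finally show ?thesis
    using dense by (simp add: algebra_simps)
qed

lemma measure_le_of_negligible_diff: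
  assumes "negligible (S - U)" "U \<in> lmeasurable" "S \<in> sets lebesgue"
  shows "measure lebesgue S \<le> measure lebesgue U"
proof -
  have N: "S - U \<in> lmeasurable" "measure lebesgue (S - U) = 0"
    using assms(1) by (auto simp: negligible_iff_measure)
  have "measure lebesgue S \<le> measure lebesgue ((S - U) \<union> U)"
    using assms N by (intro measure_mono_fmeasurable fmeasurable.Un) auto
  also have "\<dots> \<le> measure lebesgue (S - U) + measure lebesgue U"
    using assms N by (intro measure_Un_le) auto
  finally show ?thesis using N(2) by linarith
qed

lemma measure_le_if_density_gap:
  fixes T :: "'a::euclidean_space set"
  assumes T: "T \<in> sets lebesgue" and \<kappa>: "\<kappa> \<le> 1"
    and S: "S \<subseteq> T" "S \<in> sets lebesgue" and Q: "open Q" "S \<subseteq> Q" "Q \<in> lmeasurable"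
    and gap: "\<And>x r. x \<in> S \<Longrightarrow> 0 < r \<Longrightarrow> \<exists>d. 0 < d \<and> d \<le> r \<and>
       measure lebesgue (T \<inter> ball x d) \<le> (1 - \<kappa>) * measure lebesgue (ball x d)"
  shows "measure lebesgue S \<le> (1 - \<kappa>) * measure lebesgue Q"
proof -
  obtain C where C: "countable C"
    and CQ: "\<forall>(x, d)\<in>C. x \<in> S \<and> 0 < d \<and> ball x d \<subseteq> Q \<and>
               measure lebesgue (T \<inter> ball x d) \<le> (1 - \<kappa>) * measure lebesgue (ball x d)"
    and disj: "pairwise (\<lambda>i j. disjnt (ball (fst i) (snd i)) (ball (fst j) (snd j))) C"
    and null: "negligible (S - (\<Union>(x, d)\<in>C. ball x d))"
    using gap by (rule Vitali_fine_cover_in_open[OF Q(1,2)])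
  have "T \<inter> ball x d \<in> lmeasurable" for x d
    by (rule bounded_set_imp_lmeasurable) (auto intro: T)
  then have U: "(\<Union>(x, d)\<in>C. T \<inter> ball x d) \<in> lmeasurable"
    "measure lebesgue (\<Union>(x, d)\<in>C. T \<inter> ball x d) \<le> (1 - \<kappa>) * measure lebesgue Q"
    using measure_UN_disjoint_balls_le[OF C disj Q(3), of "\<lambda>x d. T \<inter> ball x d" "1 - \<kappa>"] CQ \<kappa>
    by fastforce+
  have "S - (\<Union>(x, d)\<in>C. T \<inter> ball x d) \<subseteq> S - (\<Union>(x, d)\<in>C. ball x d)"
    using S(1) by blast
  then have "measure lebesgue S \<le> measure lebesgue (\<Union>(x, d)\<in>C. T \<inter> ball x d)"
    using S(2) null U(1) by (intro measure_le_of_negligible_diff) (auto intro: negligible_subset)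
  with U(2) show ?thesis by linarith
qed

lemma negligible_if_density_gap:
  fixes T :: "'a::euclidean_space set"
  assumes T: "T \<in> sets lebesgue" and \<kappa>: "0 < \<kappa>" "\<kappa> \<le> 1"
    and gap: "\<And>x r. x \<in> T \<Longrightarrow> 0 < r \<Longrightarrow> \<exists>d. 0 < d \<and> d \<le> r \<and>
       measure lebesgue (T \<inter> ball x d) \<le> (1 - \<kappa>) * measure lebesgue (ball x d)"
  shows "negligible T"
proof -
  have null: "negligible (T \<inter> ball 0 (real n))" for n
  proof -
    let ?S = "T \<inter> ball 0 (real n)"
    have S: "?S \<in> lmeasurable"
      by (rule bounded_set_imp_lmeasurable) (auto intro: T)
    have "measure lebesgue ?S \<le> (1 - \<kappa>) * measure lebesgue ?S"
    proof (rule measure_le_if_le_open_supersets[OF S])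
      fix Q assume "open Q" "?S \<subseteq> Q" "Q \<in> lmeasurable"
      then show "measure lebesgue ?S \<le> (1 - \<kappa>) * measure lebesgue Q"
        using S gap by (intro measure_le_if_density_gap[OF T \<kappa>(2)]) auto
    qed (use \<kappa> in simp)
    then have "measure lebesgue ?S = 0"
      using \<kappa> measure_nonneg[of lebesgue ?S] by (simp add: algebra_simps mult_le_0_iff)
    then show ?thesis
      using S by (simp add: negligible_iff_measure0)
  qed
  have "T = (\<Union>n. T \<inter> ball 0 (real n))"
    by (auto simp: dist_norm) (meson reals_Archimedean2)
  also have "negligible \<dots>"
    using null by (intro negligible_countable_Union) auto
  finally show ?thesis .
qed

lemma measure_lipschitz_image_le_open:
  fixes h :: "'a::euclidean_space \<Rightarrow> 'a"
  assumes h: "s-lipschitz_on S h" and Y: "Y \<in> sets lebesgue" "Y \<subseteq> h ` S"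
    and Q: "open Q" "S \<subseteq> Q" "Q \<in> lmeasurable"
  shows "measure lebesgue Y \<le> s ^ DIM('a) * measure lebesgue Q"
proof -
  have s: "s \<ge> 0" using h by (rule lipschitz_on_nonneg)
  obtain C where C: "countable C"
    and CQ: "\<forall>(x, d)\<in>C. x \<in> S \<and> 0 < d \<and> ball x d \<subseteq> Q"
    and disj: "pairwise (\<lambda>i j. disjnt (ball (fst i) (snd i)) (ball (fst j) (snd j))) C"
    and null: "negligible (S - (\<Union>(x, d)\<in>C. ball x d))"
    by (rule Vitali_fine_cover_in_open[OF Q(1,2), where P = "\<lambda>_ _. True"]) auto
  have "ball x d \<subseteq> Q" "cball (h x) (s * d) \<in> lmeasurable"
    "measure lebesgue (cball (h x) (s * d)) \<le> s ^ DIM('a) * measure lebesgue (ball x d)"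
    if "(x, d) \<in> C" for x d
    using that CQ measure_cball_scaled[OF s, of d "h x" x] by auto
  note U = measure_UN_disjoint_balls_le[OF C disj Q(3) this zero_le_power[OF s]]
  have "Y - (\<Union>(x, d)\<in>C. cball (h x) (s * d)) \<subseteq> h ` (S - (\<Union>(x, d)\<in>C. ball x d))"
  proof
    fix y assume y: "y \<in> Y - (\<Union>(x, d)\<in>C. cball (h x) (s * d))"
    then obtain u where u: "u \<in> S" "y = h u" using Y by blast
    have "u \<notin> ball x d" if "(x, d) \<in> C" for x d
    proof
      assume "u \<in> ball x d"
      moreover have "x \<in> S" using CQ that by auto
      ultimately have "dist (h x) y \<le> s * d"
        using lipschitz_onD[OF h, of x u] u s
        by (metis dual_order.trans less_eq_real_def mem_ball mult_left_mono)
      then show False using y that by auto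
    qed
    with u show "y \<in> h ` (S - (\<Union>(x, d)\<in>C. ball x d))" by blast
  qed
  moreover have "negligible (h ` (S - (\<Union>(x, d)\<in>C. ball x d)))"
    using lipschitz_onD[OF h]
    by (intro negligible_locally_Lipschitz_image[OF order_refl null] exI[of _ UNIV] exI[of _ s])
      (auto simp: dist_norm)
  ultimately have "measure lebesgue Y \<le> measure lebesgue (\<Union>(x, d)\<in>C. cball (h x) (s * d))"
    using Y U(1) by (intro measure_le_of_negligible_diff) (auto intro: negligible_subset)
  with U(2) show ?thesis by linarith
qed

lemma measure_lipschitz_image_le:
  fixes h :: "'a::euclidean_space \<Rightarrow> 'a"
  assumes S: "S \<in> lmeasurable" and h: "s-lipschitz_on S h" and Y: "Y \<in> sets lebesgue" "Y \<subseteq> h ` S"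
  shows "measure lebesgue Y \<le> s ^ DIM('a) * measure lebesgue S"
proof (rule measure_le_if_le_open_supersets[OF S])
  show "0 \<le> s ^ DIM('a)"
    using lipschitz_on_nonneg[OF h] by simp
qed (rule measure_lipschitz_image_le_open[OF h Y])

lemma phi_word_Nil [simp]: "phi_word \<phi> [] = id"
  by (simp add: phi_word_def)

lemma phi_word_Cons [simp]: "phi_word \<phi> (i # a) x = \<phi> i (phi_word \<phi> a x)"
  by (simp add: phi_word_def)

lemma phi_word_append: "phi_word \<phi> (a @ b) x = phi_word \<phi> a (phi_word \<phi> b x)"
  by (induction a) auto

lemma Cons_in_words_iff [simp]: "i # a \<in> words l \<longleftrightarrow> i \<in> {1..l} \<and> a \<in> words l"
  by (auto simp: words_def)

lemma countable_words: "countable (words l)"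
  by (rule countable_subset[OF subset_UNIV]) simp

lemma finite_words_ge_if_Max_tendsto_0:
  fixes \<Psi> :: "nat list \<Rightarrow> real"
  assumes lim: "(\<lambda>n. Max (\<Psi> ` words_n l n)) \<longlonglongrightarrow> 0" and \<delta>: "\<delta> > 0"
  shows "finite {a \<in> words l. \<delta> \<le> \<Psi> a}"
proof -
  obtain N where N: "\<And>n. n \<ge> N \<Longrightarrow> Max (\<Psi> ` words_n l n) < \<delta>"
    using order_tendstoD(2)[OF lim \<delta>] unfolding eventually_sequentially by blast
  have "length a < N" if "a \<in> words l" "\<delta> \<le> \<Psi> a" for a
  proof (rule ccontr)
    assume "\<not> length a < N"
    moreover have "finite (words_n l (length a))"
      unfolding words_n_def using finite_lists_length_eq[of "{1..l}"] by simp
    moreover have "a \<in> words_n l (length a)"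
      using that by (simp add: words_def words_n_def)
    ultimately have "\<Psi> a < \<delta>"
      using N[of "length a"] by (meson Max_ge finite_imageI imageI le_less_trans not_less)
    with that show False by simp
  qed
  then have "{a \<in> words l. \<delta> \<le> \<Psi> a} \<subseteq> {a. set a \<subseteq> {1..l} \<and> length a \<le> N}"
    by (force simp: words_def)
  then show ?thesis
    by (rule finite_subset) (simp add: finite_lists_length_le)
qed

lemma W_set_eq_INT_UN:
  "W_set l \<phi> z \<rho> = (\<Inter>F\<in>{F. finite F \<and> F \<subseteq> words l}. \<Union>a\<in>words l - F. cball (phi_word \<phi> a z) (\<rho> a))"
proof (intro set_eqI)
  fix x
  let ?A = "{a \<in> words l. dist x (phi_word \<phi> a z) \<le> \<rho> a}"
  have "infinite ?A \<longleftrightarrow>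
      (\<forall>F. finite F \<and> F \<subseteq> words l \<longrightarrow> (\<exists>a\<in>words l - F. dist x (phi_word \<phi> a z) \<le> \<rho> a))"
  proof
    assume "infinite ?A"
    then show "\<forall>F. finite F \<and> F \<subseteq> words l \<longrightarrow> (\<exists>a\<in>words l - F. dist x (phi_word \<phi> a z) \<le> \<rho> a)"
      by (metis (no_types, lifting) DiffI finite_subset mem_Collect_eq subsetI)
  qed (use Collect_subset in blast)
  then show "x \<in> W_set l \<phi> z \<rho> \<longleftrightarrow>
      x \<in> (\<Inter>F\<in>{F. finite F \<and> F \<subseteq> words l}. \<Union>a\<in>words l - F. cball (phi_word \<phi> a z) (\<rho> a))"
    by (simp add: W_set_def dist_commute)
qed

lemma sets_borel_W_set: "W_set l \<phi> z \<rho> \<in> sets borel"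
  unfolding W_set_eq_INT_UN
  by (intro sets.countable_INT' countable_Collect_finite_subset[OF countable_words]
        sets.countable_UN'' countable_subset[OF _ countable_words] borel_closed)
     auto

lemma W_set_image:
  assumes i: "i \<in> {1..l}" and lip: "\<And>x y. dist (\<phi> i x) (\<phi> i y) \<le> dist x y"
    and \<rho>: "\<And>a. a \<in> words l \<Longrightarrow> \<rho> a \<le> \<rho>' (i # a)"
    and x: "x \<in> W_set l \<phi> z \<rho>"
  shows "\<phi> i x \<in> W_set l \<phi> z \<rho>'"
proof -
  let ?A = "{a \<in> words l. dist x (phi_word \<phi> a z) \<le> \<rho> a}"
  have "Cons i ` ?A \<subseteq> {b \<in> words l. dist (\<phi> i x) (phi_word \<phi> b z) \<le> \<rho>' b}"
    using i lip[of x] \<rho> by (force intro: order_trans)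
  moreover have "infinite (Cons i ` ?A)"
    using x by (simp add: W_set_def finite_image_iff)
  ultimately show ?thesis
    unfolding W_set_def by (auto dest: finite_subset)
qed

lemma measure_Int_ball_le_if_disjoint_cball:
  fixes x c :: "'a::euclidean_space"
  assumes C: "C \<ge> 1" and r: "0 < r" and xc: "dist x c \<le> C * r"
    and E: "E \<in> sets lebesgue" "E \<inter> cball c r = {}"
  shows "measure lebesgue (E \<inter> ball x (3 * C * r))
           \<le> (1 - (1 / (3 * C)) ^ DIM('a)) * measure lebesgue (ball x (3 * C * r))"
proof -
  let ?d = "3 * C * r"
  have "cball c r \<subseteq> ball x ?d"
  proof
    fix y assume "y \<in> cball c r"
    then have "dist x y \<le> C * r + r"
      using xc dist_triangle[of x y c] by (simp add: dist_commute)
    also have "\<dots> < ?d" using C r by (simp add: algebra_simps)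
    finally show "y \<in> ball x ?d" by simp
  qed
  moreover have "measure lebesgue (cball c r) = (1 / (3 * C)) ^ DIM('a) * measure lebesgue (ball x ?d)"
    using measure_cball_scaled[of "1 / (3 * C)" ?d c x] C r by simp
  ultimately have "(1 / (3 * C)) ^ DIM('a) * measure lebesgue (ball x ?d)
      \<le> measure lebesgue (cball c r \<inter> ball x ?d)"
    by (simp add: Int_absorb2)
  from measure_Diff_Int_ball_le[OF E(1) _ this] show ?thesis
    using E(2) by (simp add: Diff_triv)
qed

lemma negligible_W_set_scaled_diff:
  fixes \<phi> :: "nat \<Rightarrow> 'a::euclidean_space \<Rightarrow> 'a" and \<rho> :: "nat list \<Rightarrow> real"
  assumes C: "C \<ge> 1" and nonneg: "\<And>a. a \<in> words l \<Longrightarrow> \<rho> a \<ge> 0"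
    and fin: "\<And>\<delta>. \<delta> > 0 \<Longrightarrow> finite {a \<in> words l. \<delta> \<le> \<rho> a}"
  shows "negligible (W_set l \<phi> z (\<lambda>a. C * \<rho> a) - W_set l \<phi> z \<rho>)"
proof -
  let ?c = "\<lambda>a. phi_word \<phi> a z" and ?W = "W_set l \<phi> z (\<lambda>a. C * \<rho> a)"
  define U where "U F = (\<Union>a\<in>words l - F. cball (?c a) (\<rho> a))" for F
  define \<kappa> :: real where "\<kappa> = (1 / (3 * C)) ^ DIM('a)"
  have \<kappa>: "0 < \<kappa>" "\<kappa> \<le> 1"
    using C by (auto simp: \<kappa>_def intro: power_le_one)
  have eq: "?W - W_set l \<phi> z \<rho> = (\<Union>F\<in>{F. finite F \<and> F \<subseteq> words l}. ?W - U F)"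
    by (auto simp: W_set_eq_INT_UN[of l \<phi> z \<rho>] U_def)
  have null: "negligible (?W - U F)" if F: "finite F" for F
  proof (rule negligible_if_density_gap[OF _ \<kappa>])
    have "U F \<in> sets borel"
      unfolding U_def
      by (intro sets.countable_UN'' countable_subset[OF _ countable_words] borel_closed) auto
    then show meas: "?W - U F \<in> sets lebesgue"
      using sets_borel_W_set sets_completionI_sets sets_lborel by blast
    fix x r assume x: "x \<in> ?W - U F" and "(0::real) < r"
    then have \<delta>: "r / (3 * C) > 0" using C by simp
    have "infinite {a \<in> words l. dist x (?c a) \<le> C * \<rho> a}"
      using x by (simp add: W_set_def)
    moreover have "finite (F \<union> {a \<in> words l. r / (3 * C) \<le> \<rho> a})"
      using F fin[OF \<delta>] by simp
    ultimately obtain a where a: "a \<in> words l" "dist x (?c a) \<le> C * \<rho> a" "a \<notin> F"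
      "\<rho> a < r / (3 * C)"
      by (metis (mono_tags, lifting) UnI1 UnI2 mem_Collect_eq not_le subsetI finite_subset)
    have disj: "(?W - U F) \<inter> cball (?c a) (\<rho> a) = {}"
      using a by (auto simp: U_def)
    have "\<rho> a > 0"
      using disj x a(2) nonneg[OF a(1)] by (cases "\<rho> a = 0") auto
    then show "\<exists>d>0. d \<le> r \<and> measure lebesgue ((?W - U F) \<inter> ball x d)
                 \<le> (1 - \<kappa>) * measure lebesgue (ball x d)"
      using measure_Int_ball_le_if_disjoint_cball[OF C _ a(2) meas disj] a(4) C
      by (intro exI[of _ "3 * C * \<rho> a"]) (auto simp: \<kappa>_def field_simps)
  qed
  show ?thesis
    unfolding eq using countable_Collect_finite_subset[OF countable_words, of l] null
    by (intro negligible_countable_Union) auto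
qed

lemma is_contraction_dist_le:
  assumes "is_contraction f" shows "dist (f x) (f y) \<le> dist x y"
proof -
  obtain r where r: "0 \<le> r" "r < 1" "\<forall>x y. dist (f x) (f y) \<le> r * dist x y"
    using assms by (auto simp: is_contraction_def)
  then have "dist (f x) (f y) \<le> r * dist x y" by blast
  also have "\<dots> \<le> dist x y"
    using r by (simp add: mult_left_le_one_le)
  finally show ?thesis .
qed

lemma IFS_dist_le:
  assumes "IFS l \<phi>" "i \<in> {1..l}" shows "dist (\<phi> i x) (\<phi> i y) \<le> dist x y"
  using assms by (auto simp: IFS_def intro: is_contraction_dist_le)

lemma phi_word_in_attractor:
  assumes X: "is_attractor l \<phi> X" and "a \<in> words l" "x \<in> X"
  shows "phi_word \<phi> a x \<in> X"
  using assms(2,3)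
proof (induction a)
  case (Cons i a)
  then have "i \<in> {1..l}" "phi_word \<phi> a x \<in> X" by auto
  then show ?case using X unfolding is_attractor_def phi_word_Cons by blast
qed simp

lemma attractor_covered_by_words:
  assumes X: "is_attractor l \<phi> X" and "x \<in> X"
  shows "\<exists>a \<in> words l. length a = n \<and> x \<in> phi_word \<phi> a ` X"
  using assms(2)
proof (induction n arbitrary: x)
  case 0
  then show ?case by (auto simp: words_def)
next
  case (Suc n)
  then obtain i y where iy: "i \<in> {1..l}" "y \<in> X" "x = \<phi> i y"
    using X unfolding is_attractor_def by blast
  then obtain a w where "a \<in> words l" "length a = n" "w \<in> X" "y = phi_word \<phi> a w"
    using Suc.IH by blast
  with iy show ?case by (intro bexI[of _ "i # a"]) auto
qed

lemma W_set_subset_attractor: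
  fixes \<Psi> :: "nat list \<Rightarrow> real"
  assumes X: "is_attractor l \<phi> X" and z: "z \<in> X"
    and lim: "(\<lambda>n. Max (\<Psi> ` words_n l n)) \<longlonglongrightarrow> 0"
  shows "W_set l \<phi> z \<Psi> \<subseteq> X"
proof
  fix x assume x: "x \<in> W_set l \<phi> z \<Psi>"
  have "\<exists>y\<in>X. dist y x < e" if e: "e > 0" for e
  proof -
    have "infinite {a \<in> words l. dist x (phi_word \<phi> a z) \<le> \<Psi> a}"
      using x by (simp add: W_set_def)
    with finite_words_ge_if_Max_tendsto_0[OF lim e]
    obtain a where "a \<in> words l" "dist x (phi_word \<phi> a z) \<le> \<Psi> a" "\<Psi> a < e"
      by (metis (mono_tags, lifting) finite_subset mem_Collect_eq not_le subsetI)
    then show ?thesis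
      using phi_word_in_attractor[OF X _ z] by (metis dist_commute order.strict_trans1)
  qed
  moreover have "closed X" using X by (auto simp: is_attractor_def compact_imp_closed)
  ultimately show "x \<in> X" using closed_approachable by blast
qed

definition W_up_to_const :: "nat \<Rightarrow> (nat \<Rightarrow> 'a::euclidean_space \<Rightarrow> 'a) \<Rightarrow> 'a \<Rightarrow> (nat list \<Rightarrow> real) \<Rightarrow> 'a set"
  where "W_up_to_const l \<phi> z \<Psi> = (\<Union>k::nat. W_set l \<phi> z (\<lambda>a. real (Suc k) * \<Psi> a))"

lemma sets_borel_W_up_to_const: "W_up_to_const l \<phi> z \<Psi> \<in> sets borel"
  unfolding W_up_to_const_def using sets_borel_W_set by (intro sets.countable_UN) blast

lemma sets_lebesgue_W_up_to_const: "W_up_to_const l \<phi> z \<Psi> \<in> sets lebesgue"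
  using sets_borel_W_up_to_const sets_completionI_sets sets_lborel by blast

lemma W_set_subset_W_up_to_const: "W_set l \<phi> z \<Psi> \<subseteq> W_up_to_const l \<phi> z \<Psi>"
  using UN_upper[of 0 UNIV "\<lambda>k. W_set l \<phi> z (\<lambda>a. real (Suc k) * \<Psi> a)"]
  by (simp add: W_up_to_const_def)

lemma negligible_W_up_to_const_diff:
  fixes \<Psi> :: "nat list \<Rightarrow> real" and \<phi> :: "nat \<Rightarrow> 'a::euclidean_space \<Rightarrow> 'a"
  assumes nonneg: "\<forall>a\<in>words l. \<Psi> a \<ge> 0"
    and lim: "(\<lambda>n. Max (\<Psi> ` words_n l n)) \<longlonglongrightarrow> 0"
  shows "negligible (W_up_to_const l \<phi> z \<Psi> - W_set l \<phi> z \<Psi>)"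
proof -
  have "W_up_to_const l \<phi> z \<Psi> - W_set l \<phi> z \<Psi>
      = (\<Union>k::nat. W_set l \<phi> z (\<lambda>a. real (Suc k) * \<Psi> a) - W_set l \<phi> z \<Psi>)"
    unfolding W_up_to_const_def by blast
  also have "negligible \<dots>"
    using nonneg finite_words_ge_if_Max_tendsto_0[OF lim]
    by (intro negligible_countable_Union) (auto intro!: negligible_W_set_scaled_diff)
  finally show ?thesis .
qed

lemma W_up_to_const_image:
  fixes \<Psi> :: "nat list \<Rightarrow> real"
  assumes nonneg: "\<forall>a\<in>words l. \<Psi> a \<ge> 0" and wd: "weakly_decaying l \<Psi>"
    and i: "i \<in> {1..l}" and lip: "\<And>x y. dist (\<phi> i x) (\<phi> i y) \<le> dist x y"
    and x: "x \<in> W_up_to_const l \<phi> z \<Psi>"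
  shows "\<phi> i x \<in> W_up_to_const l \<phi> z \<Psi>"
proof -
  obtain c where c: "c > 0" "\<forall>a\<in>words l. \<forall>i\<in>{1..l}. c * \<Psi> a \<le> \<Psi> (i # a)"
    using wd by (auto simp: weakly_decaying_def)
  obtain k where k: "x \<in> W_set l \<phi> z (\<lambda>a. real (Suc k) * \<Psi> a)"
    using x by (auto simp: W_up_to_const_def)
  obtain n :: nat where "real (Suc k) / c \<le> real n"
    using real_arch_simple by blast
  then have n: "real (Suc k) / c \<le> real (Suc n)" by simp
  have "\<phi> i x \<in> W_set l \<phi> z (\<lambda>a. real (Suc n) * \<Psi> a)"
  proof (rule W_set_image[OF i lip _ k])
    fix a assume a: "a \<in> words l"
    have "real (Suc k) * \<Psi> a = real (Suc k) / c * (c * \<Psi> a)" using c by simp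
    also have "\<dots> \<le> real (Suc n) * \<Psi> (i # a)"
      using c a i n nonneg by (intro mult_mono) auto
    finally show "real (Suc k) * \<Psi> a \<le> real (Suc n) * \<Psi> (i # a)" .
  qed
  then show ?thesis unfolding W_up_to_const_def by blast
qed

lemma phi_word_W_up_to_const:
  fixes \<Psi> :: "nat list \<Rightarrow> real"
  assumes ifs: "IFS l \<phi>" and nonneg: "\<forall>a\<in>words l. \<Psi> a \<ge> 0"
    and wd: "weakly_decaying l \<Psi>" and "a \<in> words l" and x: "x \<in> W_up_to_const l \<phi> z \<Psi>"
  shows "phi_word \<phi> a x \<in> W_up_to_const l \<phi> z \<Psi>"
  using assms(4)
proof (induction a)
  case (Cons i a)
  then have i: "i \<in> {1..l}" by simp
  from Cons show ?case
    using W_up_to_const_image[where \<phi> = \<phi>, OF nonneg wd i IFS_dist_le[OF ifs i]] by simp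
qed (simp add: x)

lemma phi_word_similarity:
  assumes sim: "\<And>i. i \<in> {1..l} \<Longrightarrow> \<exists>\<rho>. 0 < \<rho> \<and> \<rho> \<le> r \<and> (\<forall>x y. dist (\<phi> i x) (\<phi> i y) = \<rho> * dist x y)"
    and "a \<in> words l"
  shows "\<exists>\<rho>. 0 < \<rho> \<and> \<rho> \<le> r ^ length a \<and> (\<forall>x y. dist (phi_word \<phi> a x) (phi_word \<phi> a y) = \<rho> * dist x y)"
  using assms(2)
proof (induction a)
  case Nil
  then show ?case by (intro exI[of _ 1]) simp
next
  case (Cons i a)
  then obtain \<rho> \<rho>' where "0 < \<rho>" "\<rho> \<le> r ^ length a"
    "\<forall>x y. dist (phi_word \<phi> a x) (phi_word \<phi> a y) = \<rho> * dist x y"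
    "0 < \<rho>'" "\<rho>' \<le> r" "\<forall>x y. dist (\<phi> i x) (\<phi> i y) = \<rho>' * dist x y"
    using sim by fastforce
  then show ?case
    by (intro exI[of _ "\<rho>' * \<rho>"]) (auto intro: mult_mono)
qed

lemma similarities_uniform_ratio:
  fixes \<phi> :: "nat \<Rightarrow> 'a::metric_space \<Rightarrow> 'a"
  assumes "\<forall>i\<in>{1..l}. is_similarity (\<phi> i)"
  obtains r where "r < 1"
    "\<And>i. i \<in> {1..l} \<Longrightarrow> \<exists>\<rho>. 0 < \<rho> \<and> \<rho> \<le> r \<and> (\<forall>x y. dist (\<phi> i x) (\<phi> i y) = \<rho> * dist x y)"
proof -
  obtain \<rho> where \<rho>: "\<And>i. i \<in> {1..l} \<Longrightarrow> 0 < \<rho> i \<and> \<rho> i < 1 \<and> (\<forall>x y. dist (\<phi> i x) (\<phi> i y) = \<rho> i * dist x y)"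
    using assms unfolding is_similarity_def by metis
  show ?thesis
  proof (rule that[of "Max (insert 0 (\<rho> ` {1..l}))"])
    have "\<forall>i\<in>{1..l}. \<rho> i < 1" using \<rho> by blast
    then show "Max (insert 0 (\<rho> ` {1..l})) < 1"
      by simp
    show "\<exists>r. 0 < r \<and> r \<le> Max (insert 0 (\<rho> ` {1..l})) \<and> (\<forall>x y. dist (\<phi> i x) (\<phi> i y) = r * dist x y)"
      if "i \<in> {1..l}" for i
    proof (intro exI[of _ "\<rho> i"] conjI)
      show "\<rho> i \<le> Max (insert 0 (\<rho> ` {1..l}))"
        using that by (intro Max_ge) auto
    qed (use \<rho>[OF that] in auto)
  qed
qed

lemma attractor_small_similar_copy:
  assumes X: "is_attractor l \<phi> X" and sim: "\<forall>i\<in>{1..l}. is_similarity (\<phi> i)"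
    and x: "x \<in> X" and r: "0 < r" and D: "0 < D"
  shows "\<exists>a\<in>words l. \<exists>\<rho>. 0 < \<rho> \<and> \<rho> * D \<le> r \<and> x \<in> phi_word \<phi> a ` X \<and>
           (\<forall>u v. dist (phi_word \<phi> a u) (phi_word \<phi> a v) = \<rho> * dist u v)"
proof -
  obtain s where s: "s < 1"
    "\<And>i. i \<in> {1..l} \<Longrightarrow> \<exists>\<rho>. 0 < \<rho> \<and> \<rho> \<le> s \<and> (\<forall>x y. dist (\<phi> i x) (\<phi> i y) = \<rho> * dist x y)"
    using similarities_uniform_ratio[OF sim] by blast
  obtain n where n: "s ^ n < r / D"
    using real_arch_pow_inv[of "r / D" s] r D s(1) by auto
  obtain a where a: "a \<in> words l" "length a = n" "x \<in> phi_word \<phi> a ` X"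
    using attractor_covered_by_words[OF X x] by blast
  moreover obtain \<rho> where \<rho>: "0 < \<rho>" "\<rho> \<le> s ^ n"
    "\<forall>u v. dist (phi_word \<phi> a u) (phi_word \<phi> a v) = \<rho> * dist u v"
    using phi_word_similarity[where \<phi> = \<phi>, OF s(2) a(1)] a(2) by blast
  moreover have "\<rho> * D \<le> r"
  proof -
    have "\<rho> * D \<le> s ^ n * D" using \<rho>(2) D by simp
    also have "\<dots> < r" using n D by (simp add: pos_less_divide_eq)
    finally show ?thesis by simp
  qed
  ultimately show ?thesis by blast
qed

lemma compact_image_dist_scaling:
  assumes "compact X" "0 \<le> \<rho>" "\<forall>u v. dist (f u) (f v) = \<rho> * dist u v"
  shows "compact (f ` X)"
proof (rule compact_continuous_image[OF _ assms(1)])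
  show "continuous_on X f"
    using assms(2,3) by (intro lipschitz_on_continuous_on[of \<rho>]) (auto simp: lipschitz_on_def)
qed

lemma measure_Int_le_similar_copy:
  fixes f :: "'a::euclidean_space \<Rightarrow> 'a"
  assumes X: "compact X" and V: "V \<in> sets lebesgue" and fV: "f ` (V \<inter> X) \<subseteq> V"
    and \<rho>: "0 < \<rho>" and f: "\<forall>u v. dist (f u) (f v) = \<rho> * dist u v"
  shows "measure lebesgue (V \<inter> X) \<le> (1 / \<rho>) ^ DIM('a) * measure lebesgue (V \<inter> f ` X)"
proof (rule measure_lipschitz_image_le)
  have "compact (f ` X)"
    using compact_image_dist_scaling[OF X less_imp_le[OF \<rho>] f] .
  then show "V \<inter> f ` X \<in> lmeasurable"
    using V lmeasurable_compact by (intro bounded_set_imp_lmeasurable)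
      (auto intro: bounded_subset[OF compact_imp_bounded])
  have inj: "inj_on f X"
    using f \<rho> by (intro inj_onI) (metis dist_eq_0_iff mult_eq_0_iff less_irrefl)
  show "(1 / \<rho>)-lipschitz_on (V \<inter> f ` X) (inv_into X f)"
    using f \<rho> inj by (intro lipschitz_onI) (auto simp: inv_into_f_f)
  show "V \<inter> X \<subseteq> inv_into X f ` (V \<inter> f ` X)"
  proof
    fix y assume y: "y \<in> V \<inter> X"
    then have "f y \<in> V \<inter> f ` X" "inv_into X f (f y) = y"
      using fV inj by (auto simp: inv_into_f_f)
    then show "y \<in> inv_into X f ` (V \<inter> f ` X)" by (metis image_eqI)
  qed
  show "V \<inter> X \<in> sets lebesgue"
    using V lmeasurable_compact[OF X] by auto
qed

lemma lower_density_at_similar_copy: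
  fixes f :: "'a::euclidean_space \<Rightarrow> 'a"
  assumes X: "compact X" and V: "V \<in> sets lebesgue" and fV: "f ` (V \<inter> X) \<subseteq> V"
    and \<rho>: "0 < \<rho>" and f: "\<forall>u v. dist (f u) (f v) = \<rho> * dist u v"
    and D: "0 < D" and fX: "f ` X \<subseteq> ball x (\<rho> * D)"
  shows "measure lebesgue (V \<inter> X) / (D ^ DIM('a) * measure lebesgue (ball (0::'a) 1))
           * measure lebesgue (ball x (\<rho> * D))
         \<le> measure lebesgue (V \<inter> ball x (\<rho> * D))"
proof -
  let ?\<mu> = "measure lebesgue" and ?n = "DIM('a)"
  have "?\<mu> (ball x (\<rho> * D)) = \<rho> ^ ?n * (D ^ ?n * ?\<mu> (ball (0::'a) 1))"
    using \<rho> D content_ball_conv_unit_ball[of "\<rho> * D" x] by (simp add: power_mult_distrib)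
  then have "?\<mu> (V \<inter> X) / (D ^ ?n * ?\<mu> (ball (0::'a) 1)) * ?\<mu> (ball x (\<rho> * D))
      = \<rho> ^ ?n * ?\<mu> (V \<inter> X)"
    using D content_ball_pos[of 0 1] by (simp add: field_simps)
  also have "\<dots> \<le> \<rho> ^ ?n * ((1 / \<rho>) ^ ?n * ?\<mu> (V \<inter> f ` X))"
    using measure_Int_le_similar_copy[OF X V fV \<rho> f] \<rho> by (intro mult_left_mono) auto
  also have "\<dots> = ?\<mu> (V \<inter> f ` X)"
    using \<rho> by (simp add: power_one_over)
  also have "\<dots> \<le> ?\<mu> (V \<inter> ball x (\<rho> * D))"
    using fX V lmeasurable_compact[OF compact_image_dist_scaling[OF X less_imp_le[OF \<rho>] f]]
      fmeasurable_Int_fmeasurable[OF lmeasurable_ball V]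
    by (intro measure_mono_fmeasurable) (auto simp: Int_commute)
  finally show ?thesis .
qed

lemma negligible_attractor_diff_W_up_to_const_if_similarities:
  fixes \<phi> :: "nat \<Rightarrow> 'a::euclidean_space \<Rightarrow> 'a" and \<Psi> :: "nat list \<Rightarrow> real"
  assumes ifs: "IFS l \<phi>" and X: "is_attractor l \<phi> X"
    and nonneg: "\<forall>a\<in>words l. \<Psi> a \<ge> 0" and wd: "weakly_decaying l \<Psi>"
    and sim: "\<forall>i\<in>{1..l}. is_similarity (\<phi> i)"
    and pos: "emeasure lebesgue (W_up_to_const l \<phi> z \<Psi> \<inter> X) > 0"
  shows "negligible (X - W_up_to_const l \<phi> z \<Psi>)"
proof -
  let ?V = "W_up_to_const l \<phi> z \<Psi>" and ?\<mu> = "measure lebesgue"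
  have Xc: "compact X" using X by (simp add: is_attractor_def)
  have "?V \<inter> X \<in> lmeasurable"
    using fmeasurable_Int_fmeasurable[OF lmeasurable_compact[OF Xc] sets_lebesgue_W_up_to_const]
    by (metis Int_commute)
  then have pos: "?\<mu> (?V \<inter> X) > 0"
    using pos by (simp add: emeasure_eq_measure2)
  define D where "D = diameter X + 1"
  have D: "0 < D" "\<And>u v. u \<in> X \<Longrightarrow> v \<in> X \<Longrightarrow> dist u v < D"
    using diameter_bounded_bound[OF compact_imp_bounded[OF Xc]] diameter_ge_0[OF compact_imp_bounded[OF Xc]]
    by (force simp: D_def)+
  define \<kappa> where "\<kappa> = min 1 (?\<mu> (?V \<inter> X) / (D ^ DIM('a) * ?\<mu> (ball (0::'a) 1)))"
  have \<kappa>: "0 < \<kappa>" "\<kappa> \<le> 1"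
    using pos D content_ball_pos[of 1 "0::'a"] by (auto simp: \<kappa>_def)
  show ?thesis
  proof (rule negligible_if_density_gap[OF _ \<kappa>])
    show "X - ?V \<in> sets lebesgue"
      using lmeasurable_compact[OF Xc] sets_lebesgue_W_up_to_const by (intro sets.Diff) auto
    fix x and r :: real assume x: "x \<in> X - ?V" and r: "0 < r"
    obtain a \<rho> where a: "a \<in> words l" and \<rho>: "0 < \<rho>" "\<rho> * D \<le> r"
      and x_in: "x \<in> phi_word \<phi> a ` X"
      and f: "\<forall>u v. dist (phi_word \<phi> a u) (phi_word \<phi> a v) = \<rho> * dist u v"
      using attractor_small_similar_copy[OF X sim _ r D(1)] x by blast
    have copy: "phi_word \<phi> a ` X \<subseteq> ball x (\<rho> * D)"
      using x_in f D(2) \<rho>(1) by auto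
    have inv: "phi_word \<phi> a ` (?V \<inter> X) \<subseteq> ?V"
      using phi_word_W_up_to_const[OF ifs nonneg wd a] by blast
    have "\<kappa> * ?\<mu> (ball x (\<rho> * D))
        \<le> ?\<mu> (?V \<inter> X) / (D ^ DIM('a) * ?\<mu> (ball (0::'a) 1)) * ?\<mu> (ball x (\<rho> * D))"
      by (intro mult_right_mono) (simp_all add: \<kappa>_def)
    also have "\<dots> \<le> ?\<mu> (?V \<inter> ball x (\<rho> * D))"
      by (rule lower_density_at_similar_copy[OF Xc sets_lebesgue_W_up_to_const inv \<rho>(1) f D(1) copy])
    finally have "?\<mu> ((X - ?V) \<inter> ball x (\<rho> * D)) \<le> (1 - \<kappa>) * ?\<mu> (ball x (\<rho> * D))"
      by (rule measure_Diff_Int_ball_le[OF lmeasurable_compact[OF Xc, THEN fmeasurableD]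
            sets_lebesgue_W_up_to_const])
    then show "\<exists>d>0. d \<le> r \<and> ?\<mu> ((X - ?V) \<inter> ball x d) \<le> (1 - \<kappa>) * ?\<mu> (ball x d)"
      using \<rho> D by (intro exI[of _ "\<rho> * D"]) auto
  qed
qed

lemma space_seq_space: "space (seq_space l) = {\<omega>. \<forall>j. \<omega> j \<in> {1..l}}"
  unfolding seq_space_def space_PiM PiE_UNIV_domain Pi_def by simp

lemma map_upt_eq_iff: "map \<omega> [0..<n] = a \<longleftrightarrow> length a = n \<and> (\<forall>j\<in>{..<n}. \<omega> j = a ! j)"
  by (auto simp: list_eq_iff_nth_eq)

lemma measurable_prefix: "(\<lambda>\<omega>. map \<omega> [0..<n]) \<in> seq_space l \<rightarrow>\<^sub>M count_space UNIV"
proof (subst measurable_count_space_eq_countable, simp, safe)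
  fix a :: "nat list"
  have "(\<lambda>\<omega>. map \<omega> [0..<n]) -` {a} \<inter> space (seq_space l)
      = {\<omega> \<in> space (seq_space l). length a = n \<and> (\<forall>j\<in>{..<n}. \<omega> j = a ! j)}"
    by (intro set_eqI) (simp add: map_upt_eq_iff conj_commute conj_left_commute)
  also have "\<dots> \<in> sets (seq_space l)"
    unfolding seq_space_def by measurable
  finally show "(\<lambda>\<omega>. map \<omega> [0..<n]) -` {a} \<inter> space (seq_space l) \<in> sets (seq_space l)" .
qed simp

lemma IFS_uniform_contraction:
  fixes \<phi> :: "nat \<Rightarrow> 'a::euclidean_space \<Rightarrow> 'a"
  assumes ifs: "IFS l \<phi>"
  obtains r where "0 \<le> r" "r < 1" "\<And>i x y. i \<in> {1..l} \<Longrightarrow> dist (\<phi> i x) (\<phi> i y) \<le> r * dist x y"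
proof -
  obtain \<rho> where \<rho>: "\<And>i. i \<in> {1..l} \<Longrightarrow> 0 \<le> \<rho> i \<and> \<rho> i < 1 \<and> (\<forall>x y. dist (\<phi> i x) (\<phi> i y) \<le> \<rho> i * dist x y)"
    using ifs unfolding IFS_def is_contraction_def by metis
  let ?r = "Max (insert 0 (\<rho> ` {1..l}))"
  show ?thesis
  proof (rule that[of ?r])
    have "\<forall>i\<in>{1..l}. \<rho> i < 1" using \<rho> by blast
    then show "?r < 1" by simp
    fix i x y assume i: "i \<in> {1..l}"
    have "\<rho> i \<le> ?r" using i by (intro Max_ge) auto
    then show "dist (\<phi> i x) (\<phi> i y) \<le> ?r * dist x y"
      using \<rho>[OF i] by (meson mult_right_mono order_trans zero_le_dist)
  qed simp
qed

lemma dist_phi_word_le: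
  assumes r: "0 \<le> r" "\<And>i x y. i \<in> {1..l} \<Longrightarrow> dist (\<phi> i x) (\<phi> i y) \<le> r * dist x y"
    and "set a \<subseteq> {1..l}"
  shows "dist (phi_word \<phi> a x) (phi_word \<phi> a y) \<le> r ^ length a * dist x y"
  using assms(3)
proof (induction a)
  case (Cons i a)
  then have "dist (phi_word \<phi> (i # a) x) (phi_word \<phi> (i # a) y)
      \<le> r * dist (phi_word \<phi> a x) (phi_word \<phi> a y)"
    using r(2) by simp
  also have "\<dots> \<le> r * (r ^ length a * dist x y)"
    using Cons r(1) by (intro mult_left_mono) auto
  finally show ?case by simp
qed simp

lemma LIMSEQ_coding:
  fixes \<phi> :: "nat \<Rightarrow> 'a::euclidean_space \<Rightarrow> 'a"
  assumes ifs: "IFS l \<phi>" and \<omega>: "\<forall>j. \<omega> j \<in> {1..l}"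
  shows "(\<lambda>n. phi_word \<phi> (map \<omega> [0..<n]) 0) \<longlonglongrightarrow> coding \<phi> \<omega>"
proof -
  obtain r where r: "0 \<le> r" "r < 1" "\<And>i x y. i \<in> {1..l} \<Longrightarrow> dist (\<phi> i x) (\<phi> i y) \<le> r * dist x y"
    using IFS_uniform_contraction[OF ifs] by blast
  define g where "g n = phi_word \<phi> (map \<omega> [0..<n]) 0" for n
  define M where "M = Max ((\<lambda>i. norm (\<phi> i 0)) ` {1..l})"
  have "norm (g (Suc n) - g n) \<le> M * r ^ n" for n
  proof -
    have "norm (g (Suc n) - g n)
        = dist (phi_word \<phi> (map \<omega> [0..<n]) (\<phi> (\<omega> n) 0)) (phi_word \<phi> (map \<omega> [0..<n]) 0)"
      by (simp add: g_def phi_word_append dist_norm)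
    also have "\<dots> \<le> r ^ length (map \<omega> [0..<n]) * dist (\<phi> (\<omega> n) 0) 0"
      by (rule dist_phi_word_le[where l = l]) (use r \<omega> in auto)
    also have "\<dots> = r ^ n * norm (\<phi> (\<omega> n) 0)"
      by simp
    also have "\<dots> \<le> r ^ n * M"
      using \<omega> r(1) by (intro mult_left_mono) (auto simp: M_def)
    finally show ?thesis by (simp add: mult.commute)
  qed
  then have "summable (\<lambda>n. g (Suc n) - g n)"
    using r by (intro summable_comparison_test'[OF summable_mult[OF summable_geometric]]) auto
  then have "(\<lambda>n. g 0 + (\<Sum>k<n. g (Suc k) - g k)) \<longlonglongrightarrow> g 0 + (\<Sum>k. g (Suc k) - g k)"
    by (intro tendsto_add tendsto_const summable_LIMSEQ)
  then have "convergent g"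
    by (auto simp: sum_lessThan_telescope convergent_def)
  then show ?thesis
    by (simp add: g_def[abs_def] coding_def convergent_LIMSEQ_iff)
qed

lemma coding_Cons_shift:
  fixes \<phi> :: "nat \<Rightarrow> 'a::euclidean_space \<Rightarrow> 'a"
  assumes ifs: "IFS l \<phi>" and \<omega>: "\<forall>j. \<omega> j \<in> {1..l}"
  shows "coding \<phi> \<omega> = \<phi> (\<omega> 0) (coding \<phi> (shift \<omega>))"
proof -
  have prefix: "phi_word \<phi> (map \<omega> [0..<Suc n]) 0 = \<phi> (\<omega> 0) (phi_word \<phi> (map (shift \<omega>) [0..<n]) 0)"
    for n by (simp add: shift_def map_upt_Suc del: upt_Suc)
  have cont: "continuous_on UNIV (\<phi> (\<omega> 0))"
    using IFS_dist_le[OF ifs] \<omega>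
    by (intro lipschitz_on_continuous_on[of 1]) (auto simp: lipschitz_on_def)
  have "\<forall>j. shift \<omega> j \<in> {1..l}"
    using \<omega> by (simp add: shift_def)
  then have "(\<lambda>n. \<phi> (\<omega> 0) (phi_word \<phi> (map (shift \<omega>) [0..<n]) 0))
      \<longlonglongrightarrow> \<phi> (\<omega> 0) (coding \<phi> (shift \<omega>))"
    using continuous_on_tendsto_compose[OF cont LIMSEQ_coding[OF ifs]] by simp
  moreover have "(\<lambda>n. \<phi> (\<omega> 0) (phi_word \<phi> (map (shift \<omega>) [0..<n]) 0)) \<longlonglongrightarrow> coding \<phi> \<omega>"
    using LIMSEQ_coding[OF ifs \<omega>] unfolding prefix[symmetric] by (rule LIMSEQ_Suc)
  ultimately show ?thesis
    using LIMSEQ_unique by blast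
qed

lemma measurable_coding:
  fixes \<phi> :: "nat \<Rightarrow> 'a::euclidean_space \<Rightarrow> 'a"
  assumes ifs: "IFS l \<phi>"
  shows "coding \<phi> \<in> borel_measurable (seq_space l)"
proof (rule borel_measurable_LIMSEQ_metric)
  show "(\<lambda>\<omega>. phi_word \<phi> (map \<omega> [0..<n]) 0) \<in> borel_measurable (seq_space l)" for n
    using measurable_compose[OF measurable_prefix, of "\<lambda>a. phi_word \<phi> a 0" borel] by simp
  show "(\<lambda>n. phi_word \<phi> (map \<omega> [0..<n]) 0) \<longlonglongrightarrow> coding \<phi> \<omega>"
    if "\<omega> \<in> space (seq_space l)" for \<omega>
    using that LIMSEQ_coding[OF ifs] by (simp add: space_seq_space)
qed

lemma shift_ergodic_subinvariant:
  assumes erg: "shift_invariant_ergodic l m"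
    and E: "E \<in> sets m" and sub: "shift -` E \<inter> space m \<subseteq> E"
  shows "emeasure m E = 0 \<or> emeasure m E = 1"
proof -
  have ps: "prob_space m" and shift: "shift \<in> m \<rightarrow>\<^sub>M m"
    and inv: "\<And>A. A \<in> sets m \<Longrightarrow> emeasure m (shift -` A \<inter> space m) = emeasure m A"
    and ergodic: "\<And>A. A \<in> sets m \<Longrightarrow> shift -` A \<inter> space m = A \<Longrightarrow> emeasure m A = 0 \<or> emeasure m A = 1"
    using erg by (auto simp: shift_invariant_ergodic_def)
  define P where "P n = ((\<lambda>A. shift -` A \<inter> space m) ^^ n) E" for n
  have P_0: "P 0 = E" and P_Suc: "P (Suc n) = shift -` P n \<inter> space m" for n
    by (simp_all add: P_def)
  have P_sets: "P n \<in> sets m" for n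
    by (induction n) (auto simp: P_0 P_Suc E intro: measurable_sets[OF shift])
  have P_measure: "emeasure m (P n) = emeasure m E" for n
    by (induction n) (simp_all add: P_0 P_Suc inv P_sets)
  have P_dec: "P (Suc n) \<subseteq> P n" for n
    by (induction n) (use sub in \<open>auto simp: P_0 P_Suc\<close>)
  then have dec: "decseq P"
    by (rule decseq_SucI)
  define F where "F = (\<Inter>n. P n)"
  have "emeasure m F = (INF n. emeasure m (P n))"
    unfolding F_def using P_sets dec finite_measure.emeasure_finite[OF prob_space.finite_measure[OF ps]]
    by (intro INF_emeasure_decseq[symmetric]) auto
  also have "\<dots> = emeasure m E"
    by (simp add: P_measure)
  finally have "emeasure m F = emeasure m E" .
  moreover have "shift -` F \<inter> space m = F"
  proof
    show "shift -` F \<inter> space m \<subseteq> F"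
    proof
      fix \<omega> assume "\<omega> \<in> shift -` F \<inter> space m"
      then have "\<omega> \<in> P (Suc n)" for n
        by (simp add: F_def P_Suc)
      then show "\<omega> \<in> F"
        using P_dec by (auto simp: F_def)
    qed
    show "F \<subseteq> shift -` F \<inter> space m"
    proof
      fix \<omega> assume "\<omega> \<in> F"
      then have "\<omega> \<in> P (Suc n)" for n
        by (simp add: F_def)
      then show "\<omega> \<in> shift -` F \<inter> space m"
        by (simp add: F_def P_Suc)
    qed
  qed
  ultimately show ?thesis
    using ergodic[of F] P_sets by (simp add: F_def)
qed

lemma shift_preimage_coding_W_up_to_const_subset:
  fixes \<phi> :: "nat \<Rightarrow> 'a::euclidean_space \<Rightarrow> 'a" and \<Psi> :: "nat list \<Rightarrow> real" and z :: 'a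
  assumes ifs: "IFS l \<phi>" and nonneg: "\<forall>a\<in>words l. \<Psi> a \<ge> 0" and wd: "weakly_decaying l \<Psi>"
  defines "E \<equiv> coding \<phi> -` W_up_to_const l \<phi> z \<Psi> \<inter> space (seq_space l)"
  shows "shift -` E \<inter> space (seq_space l) \<subseteq> E"
proof
  fix \<omega> assume "\<omega> \<in> shift -` E \<inter> space (seq_space l)"
  then have \<omega>: "\<forall>j. \<omega> j \<in> {1..l}" "coding \<phi> (shift \<omega>) \<in> W_up_to_const l \<phi> z \<Psi>"
    by (auto simp: E_def space_seq_space)
  have i: "\<omega> 0 \<in> {1..l}" using \<omega>(1) by blast
  have "\<phi> (\<omega> 0) (coding \<phi> (shift \<omega>)) \<in> W_up_to_const l \<phi> z \<Psi>"
    by (rule W_up_to_const_image[where \<phi> = \<phi>, OF nonneg wd i IFS_dist_le[OF ifs i] \<omega>(2)])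
  then show "\<omega> \<in> E"
    using \<omega> coding_Cons_shift[OF ifs \<omega>(1)] by (simp add: E_def space_seq_space)
qed

lemma negligible_attractor_diff_W_up_to_const_if_ergodic:
  fixes \<phi> :: "nat \<Rightarrow> 'a::euclidean_space \<Rightarrow> 'a" and \<Psi> :: "nat list \<Rightarrow> real"
  assumes ifs: "IFS l \<phi>" and X: "X \<in> sets lebesgue"
    and nonneg: "\<forall>a\<in>words l. \<Psi> a \<ge> 0" and wd: "weakly_decaying l \<Psi>"
    and erg: "shift_invariant_ergodic l m"
    and equiv: "\<forall>A\<in>sets borel. emeasure (distr m borel (coding \<phi>)) A = 0
                   \<longleftrightarrow> emeasure lebesgue (A \<inter> X) = 0"
    and pos: "emeasure lebesgue (W_up_to_const l \<phi> z \<Psi> \<inter> X) > 0"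
  shows "negligible (X - W_up_to_const l \<phi> z \<Psi>)"
proof -
  let ?V = "W_up_to_const l \<phi> z \<Psi>"
  have ps: "prob_space m" and sets_m: "sets m = sets (seq_space l)"
    using erg by (auto simp: shift_invariant_ergodic_def)
  have space_m: "space m = space (seq_space l)"
    using sets_eq_imp_space_eq[OF sets_m] .
  have coding: "coding \<phi> \<in> m \<rightarrow>\<^sub>M borel"
    using measurable_coding[OF ifs] by (simp add: measurable_cong_sets[OF sets_m refl])
  define E where "E = coding \<phi> -` ?V \<inter> space m"
  have E: "E \<in> sets m"
    unfolding E_def by (rule measurable_sets[OF coding sets_borel_W_up_to_const])
  have "shift -` E \<inter> space m \<subseteq> E"
    using shift_preimage_coding_W_up_to_const_subset[OF ifs nonneg wd] by (simp add: E_def space_m)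
  moreover have "emeasure (distr m borel (coding \<phi>)) ?V \<noteq> 0"
    using pos equiv[rule_format, OF sets_borel_W_up_to_const] by simp
  then have "emeasure m E \<noteq> 0"
    by (simp add: emeasure_distr[OF coding sets_borel_W_up_to_const] E_def)
  ultimately have "emeasure m E = 1"
    using shift_ergodic_subinvariant[OF erg E] by blast
  then have "emeasure m (space m - E) = 0"
    using emeasure_compl[OF E] prob_space.emeasure_space_1[OF ps] by simp
  moreover have "coding \<phi> -` (UNIV - ?V) \<inter> space m = space m - E"
    by (auto simp: E_def)
  moreover have compl: "UNIV - ?V \<in> sets borel"
    using sets_borel_W_up_to_const by (intro sets.Diff) auto
  ultimately have "emeasure (distr m borel (coding \<phi>)) (UNIV - ?V) = 0"
    by (simp add: emeasure_distr[OF coding compl])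
  then have "emeasure lebesgue ((UNIV - ?V) \<inter> X) = 0"
    using equiv compl by blast
  moreover have "(UNIV - ?V) \<inter> X = X - ?V" by blast
  moreover have "X - ?V \<in> sets lebesgue"
    using X sets_lebesgue_W_up_to_const by (intro sets.Diff)
  ultimately show ?thesis
    by (simp add: negligible_iff_null_sets null_sets_def)
qed

lemma emeasure_W_up_to_const_Int_attractor_pos:
  fixes \<Psi> :: "nat list \<Rightarrow> real"
  assumes X: "is_attractor l \<phi> X" and z: "z \<in> X"
    and lim: "(\<lambda>n. Max (\<Psi> ` words_n l n)) \<longlonglongrightarrow> 0"
    and pos: "emeasure lebesgue (W_set l \<phi> z \<Psi>) > 0"
  shows "emeasure lebesgue (W_up_to_const l \<phi> z \<Psi> \<inter> X) > 0"
proof -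
  have "W_set l \<phi> z \<Psi> \<subseteq> W_up_to_const l \<phi> z \<Psi> \<inter> X"
    using W_set_subset_W_up_to_const W_set_subset_attractor[OF X z lim] by blast
  moreover have "X \<in> sets lebesgue"
    using X lmeasurable_compact by (auto simp: is_attractor_def)
  ultimately show ?thesis
    using pos emeasure_mono[of "W_set l \<phi> z \<Psi>"] sets_lebesgue_W_up_to_const
    by (metis order_less_le_trans sets.Int)
qed

lemma AE_attractor_in_W_set:
  fixes \<Psi> :: "nat list \<Rightarrow> real"
  assumes nonneg: "\<forall>a\<in>words l. \<Psi> a \<ge> 0"
    and lim: "(\<lambda>n. Max (\<Psi> ` words_n l n)) \<longlonglongrightarrow> 0"
    and null: "negligible (X - W_up_to_const l \<phi> z \<Psi>)"
  shows "AE x in lebesgue. x \<in> X \<longrightarrow> x \<in> W_set l \<phi> z \<Psi>"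
proof (rule AE_I')
  have "negligible ((X - W_up_to_const l \<phi> z \<Psi>) \<union> (W_up_to_const l \<phi> z \<Psi> - W_set l \<phi> z \<Psi>))"
    using null negligible_W_up_to_const_diff[OF nonneg lim] by (rule negligible_Un)
  then have "negligible (X - W_set l \<phi> z \<Psi>)"
    by (rule negligible_subset) blast
  then show "X - W_set l \<phi> z \<Psi> \<in> null_sets lebesgue"
    by (simp add: negligible_iff_null_sets)
qed auto

theorem mainTheorem15:
  fixes l :: nat and \<phi> :: "nat \<Rightarrow> 'a::euclidean_space \<Rightarrow> 'a" and X :: "'a set"
    and z :: 'a and \<Psi> :: "nat list \<Rightarrow> real"
  assumes ifs: "IFS l \<phi>"
    and attr: "is_attractor l \<phi> X"
    and z: "z \<in> X"
    and nonneg: "\<forall>a\<in>words l. \<Psi> a \<ge> 0"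
    and wd: "weakly_decaying l \<Psi>"
    and maxlim: "(\<lambda>n. Max (\<Psi> ` words_n l n)) \<longlonglongrightarrow> 0"
  shows "((\<forall>i\<in>{1..l}. is_similarity (\<phi> i)) \<and> emeasure lebesgue (W_set l \<phi> z \<Psi>) > 0
            \<longrightarrow> (AE x in lebesgue. x \<in> X \<longrightarrow> x \<in> W_set l \<phi> z \<Psi>))
       \<and> ((\<exists>m. shift_invariant_ergodic l m \<and>
               (\<forall>A\<in>sets borel. emeasure (distr m borel (coding \<phi>)) A = 0
                   \<longleftrightarrow> emeasure lebesgue (A \<inter> X) = 0))
            \<and> emeasure lebesgue (W_set l \<phi> z \<Psi>) > 0
            \<longrightarrow> (AE x in lebesgue. x \<in> X \<longrightarrow> x \<in> W_set l \<phi> z \<Psi>))"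
proof (intro conjI impI; elim conjE exE)
  have X: "X \<in> sets lebesgue"
    using attr lmeasurable_compact by (auto simp: is_attractor_def)
  note pos = emeasure_W_up_to_const_Int_attractor_pos[OF attr z maxlim]
  note conclude = AE_attractor_in_W_set[OF nonneg maxlim]
  show "AE x in lebesgue. x \<in> X \<longrightarrow> x \<in> W_set l \<phi> z \<Psi>"
    if "\<forall>i\<in>{1..l}. is_similarity (\<phi> i)" "emeasure lebesgue (W_set l \<phi> z \<Psi>) > 0"
    using negligible_attractor_diff_W_up_to_const_if_similarities[OF ifs attr nonneg wd that(1) pos[OF that(2)]]
    by (rule conclude)
  show "AE x in lebesgue. x \<in> X \<longrightarrow> x \<in> W_set l \<phi> z \<Psi>"
    if "shift_invariant_ergodic l m"
      "\<forall>A\<in>sets borel. emeasure (distr m borel (coding \<phi>)) A = 0 \<longleftrightarrow> emeasure lebesgue (A \<inter> X) = 0"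
      "emeasure lebesgue (W_set l \<phi> z \<Psi>) > 0" for m
    using negligible_attractor_diff_W_up_to_const_if_ergodic[OF ifs X nonneg wd that(1,2) pos[OF that(3)]]
    by (rule conclude)
qed

end
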